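(* Let $m\ge d\ge1$, $\lambda=d/m$, and let $p$ be a monic polynomial of degree $d$ with nonnegative roots. Then \[ y^{m-d}p(xy)=e^{-\widehat{\mathcal R}(\partial_x\partial_y)}\{y^mx^d\},\qquad\text{where }\ \widehat{\mathcal R}(s):=d\int_0^s\frac{\mathcal R^{d,\lambda}_{\mathbb{S}p}\big(\frac{u}{md}\big)}{u}\,du . \] In particular $p$ is uniquely determined by $\mathcal R^{d,\lambda}_{\mathbb{S}p}$.
   Context: Write $p=\sum_{i=0}^d(-1)^ip_ix^{d-i}$ and $E_p(s)=\sum_{i=0}^d(-1)^i(md)^i\frac{(m-i)!(d-i)!}{m!d!}p_is^i$; $\mathcal R^{d,\lambda}_{\mathbb{S}p}(s)$ is the polynomial of degree $\le d$ (with zero constant term) agreeing with $-\frac sd\frac d{ds}\log E_p(s)$ mod $s^{d+1}$. The exponential of a differential operator is defined by its power series; only finitely many terms act nontrivially on $y^mx^d$. *)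

theory Defs
  imports "HOL-Computational_Algebra.Computational_Algebra"
begin

text \<open>Bivariate real polynomials in x and y are represented as real poly poly:
  the outer variable is x, the coefficients are polynomials in y.\<close>

definition varX :: "real poly poly" where "varX = [:0, 1:]"
definition varY :: "real poly poly" where "varY = [:[:0, 1:]:]"

definition dxdy :: "real poly poly \<Rightarrow> real poly poly" where
  "dxdy f = map_poly pderiv (pderiv f)"

text \<open>Action of the differential operator c(dxdy) for a formal power series c:
  sum of c_k (dxdy)^k f; terms with k > deg_x f vanish.\<close>
definition fps_diff_op :: "real fps \<Rightarrow> real poly poly \<Rightarrow> real poly poly" where
  "fps_diff_op c f = (\<Sum>k\<le>degree f. smult [:c $ k:] ((dxdy ^^ k) f))"

text \<open>The coefficients p_i with p = sum_i (-1)^i p_i x^(d-i).\<close>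
definition pcoef :: "nat \<Rightarrow> real poly \<Rightarrow> nat \<Rightarrow> real" where
  "pcoef d p i = (-1) ^ i * coeff p (d - i)"

definition Ep :: "nat \<Rightarrow> nat \<Rightarrow> real poly \<Rightarrow> real poly" where
  "Ep d m p = (\<Sum>i\<le>d. monom ((-1) ^ i * (real (m * d)) ^ i
      * (fact (m - i) * fact (d - i) / (fact m * fact d)) * pcoef d p i) i)"

text \<open>R^{d,lambda}_{Sp} with lambda = d/m: truncation mod s^(d+1) of -(s/d) (log E_p)'.\<close>
definition RS :: "nat \<Rightarrow> nat \<Rightarrow> real poly \<Rightarrow> real poly" where
  "RS d m p = (let E = fps_of_poly (Ep d m p);
                   L = - fps_const (1 / real d) * fps_X * fps_deriv E / E
               in (\<Sum>k\<le>d. monom (L $ k) k))"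

text \<open>Rhat(s) = d * integral_0^s R(u/(md))/u du, for R with zero constant term:
  coefficient k is d r_k / (k (md)^k).\<close>
definition Rhat :: "nat \<Rightarrow> nat \<Rightarrow> real poly \<Rightarrow> real poly" where
  "Rhat d m R = (\<Sum>k\<in>{1..degree R}. monom (real d * coeff R k / (real k * (real (m * d)) ^ k)) k)"

definition nonneg_rooted :: "real poly \<Rightarrow> bool" where
  "nonneg_rooted p \<longleftrightarrow> (\<forall>z::complex. poly (map_poly of_real p) z = 0 \<longrightarrow> Im z = 0 \<and> Re z \<ge> 0)"

end

theory Submission
  imports Defs
begin

(* Let theta = X d/dX (fps_XD), E = E_p, F(s) = E(s/(md)) and G = exp(-Rhat). As R agrees with
   -(s/d) E'/E up to order d, we get theta F = -d R(s/(md)) F = -(theta Rhat) F up to order d,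
   while theta G = -(theta Rhat) G holds exactly. Since theta multiplies the k-th coefficient
   by k, such an equation determines a series from its constant term; hence G_k = F_k for k <= d.
   Finally (d_x d_y)^k y^m x^d = m!/(m-k)! d!/(d-k)! y^(m-k) x^(d-k), and the factorials in E_p
   are chosen so that this factor turns F_k into the coefficient of x^(d-k) in p. Uniqueness
   holds because p can be read off the diagonal coefficients of p(xy). *)

lemma fps_XD_nth: "fps_XD f $ n = of_nat n * f $ n"
  by (cases n) (simp_all add: fps_XD_def)

lemma fps_mult_nth_cong:
  assumes "\<And>j. j \<le> k \<Longrightarrow> A $ j = B $ j"
  shows "(A * F) $ k = (B * F) $ k"
  using assms by (simp add: fps_mult_nth)

lemma fps_XD_equation_unique:
  fixes F G W :: "'a::field_char_0 fps"
  assumes "W $ 0 = 0" and "F $ 0 = G $ 0"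
    and F: "\<And>k. k \<le> n \<Longrightarrow> fps_XD F $ k = (W * F) $ k"
    and G: "\<And>k. k \<le> n \<Longrightarrow> fps_XD G $ k = (W * G) $ k"
  shows "k \<le> n \<Longrightarrow> F $ k = G $ k"
proof (induction k rule: less_induct)
  case (less k)
  show ?case
  proof (cases "k = 0")
    case True
    with assms(2) show ?thesis by simp
  next
    case False
    have "(W * F) $ k = (W * G) $ k"
      unfolding fps_mult_nth
    proof (intro sum.cong refl)
      fix j assume "j \<in> {0..k}"
      then show "W $ j * F $ (k - j) = W $ j * G $ (k - j)"
        using less assms(1) False by (cases "j = 0") auto
    qed
    then have "of_nat k * F $ k = of_nat k * G $ k"
      using F[OF less.prems] G[OF less.prems] by (simp add: fps_XD_nth)
    with False show ?thesis by simp
  qed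
qed

lemma fps_XD_compose_linear:
  fixes f :: "'a::comm_ring_1 fps"
  shows "fps_XD (f oo (fps_const c * fps_X)) = fps_XD f oo (fps_const c * fps_X)"
  by (simp add: fps_eq_iff fps_XD_nth)

lemma fps_XD_exp_compose_neg:
  fixes H :: "'a::field_char_0 fps"
  assumes "H $ 0 = 0"
  shows "fps_XD (fps_exp 1 oo - H) = - fps_XD H * (fps_exp 1 oo - H)"
  using assms by (simp add: fps_XD_def fps_compose_deriv algebra_simps)

lemma coeff_Ep:
  "coeff (Ep d m p) k = (if k \<le> d then real (m * d) ^ k
      * (fact (m - k) * fact (d - k) / (fact m * fact d)) * coeff p (d - k) else 0)"
  by (simp add: Ep_def pcoef_def coeff_sum power_mult_distrib[symmetric] cong: if_cong)

lemma coeff_Rhat: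
  "coeff (Rhat d m R) j = (if j = 0 then 0 else real d * coeff R j / (real j * real (m * d) ^ j))"
  by (auto simp: Rhat_def coeff_sum coeff_eq_0)

lemma exp_neg_Rhat_RS_nth:
  assumes "1 \<le> d" "d \<le> m" "coeff p d = 1" "k \<le> d"
  shows "(fps_exp 1 oo - fps_of_poly (Rhat d m (RS d m p))) $ k
           = fact (m - k) * fact (d - k) / (fact m * fact d) * coeff p (d - k)"
proof -
  define E where "E = fps_of_poly (Ep d m p)"
  define L where "L = - fps_const (1 / real d) * fps_X * fps_deriv E / E"
  define H where "H = fps_of_poly (Rhat d m (RS d m p))"
  define c where "c = 1 / real (m * d)"
  define F where "F = E oo (fps_const c * fps_X)"
  have E0: "E $ 0 = 1"
    using assms by (simp add: E_def coeff_Ep)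
  have "L * E = - fps_const (1 / real d) * fps_XD E"
    using E0 by (simp add: L_def fps_XD_def fps_divide_unit mult.assoc inverse_mult_eq_1)
  then have XD_E: "fps_XD E = - fps_const (real d) * L * E"
    using assms(1) by (simp add: mult.assoc flip: fps_const_mult)
  have L0: "L $ 0 = 0"
    using arg_cong[OF XD_E, of "\<lambda>f. f $ 0"] E0 assms(1) by (simp add: fps_XD_nth)
  have XD_F: "fps_XD F = - fps_const (real d) * (L oo (fps_const c * fps_X)) * F"
    unfolding F_def fps_XD_compose_linear XD_E fps_const_neg[symmetric]
    by (subst fps_compose_mult_distrib) (simp_all add: fps_const_mult_apply_left)
  have RS_L: "coeff (RS d m p) j = L $ j" if "j \<le> d" for j
    using that by (simp add: RS_def Let_def coeff_sum L_def E_def)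
  have XD_H: "(fps_const (real d) * (L oo (fps_const c * fps_X))) $ j = fps_XD H $ j"
    if "j \<le> d" for j
    using that L0 assms(2) by (simp add: fps_XD_nth H_def coeff_Rhat RS_L c_def power_divide)
  have "F $ k = (fps_exp 1 oo - H) $ k"
  proof (rule fps_XD_equation_unique[where W = "- fps_XD H"])
    show "fps_XD F $ j = (- fps_XD H * F) $ j" if "j \<le> d" for j
      unfolding XD_F using that XD_H by (intro fps_mult_nth_cong) auto
    show "fps_XD (fps_exp 1 oo - H) $ j = (- fps_XD H * (fps_exp 1 oo - H)) $ j" for j
      by (simp add: fps_XD_exp_compose_neg H_def coeff_Rhat)
  qed (use assms E0 in \<open>simp_all add: fps_XD_nth F_def H_def coeff_Rhat\<close>)
  then show ?thesis
    using assms by (simp add: F_def E_def H_def c_def coeff_Ep power_divide)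
qed

lemma dxdy_monom:
  "dxdy (monom (monom a i) j) = monom (monom (a * of_nat i * of_nat j) (i - 1)) (j - 1)"
  by (simp add: dxdy_def pderiv_monom map_poly_monom of_nat_poly smult_monom mult_ac)

lemma funpow_dxdy_monom:
  assumes "k \<le> i" "k \<le> j"
  shows "(dxdy ^^ k) (monom (monom 1 i) j)
           = monom (monom (fact i * fact j / (fact (i - k) * fact (j - k))) (i - k)) (j - k)"
  using assms
proof (induction k)
  case 0
  then show ?case by simp
next
  case (Suc k)
  have fi: "fact (i - k) = of_nat (i - k) * (fact (i - Suc k) :: real)"
    and fj: "fact (j - k) = of_nat (j - k) * (fact (j - Suc k) :: real)"
    using Suc.prems by (simp_all add: fact_reduce Suc_diff_Suc)
  have "(dxdy ^^ Suc k) (monom (monom 1 i) j)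
      = dxdy (monom (monom (fact i * fact j / (fact (i - k) * fact (j - k))) (i - k)) (j - k))"
    using Suc by simp
  also have "\<dots> = monom (monom (fact i * fact j / (fact (i - Suc k) * fact (j - Suc k)))
                            (i - Suc k)) (j - Suc k)"
  proof -
    have cancel: "x / (a * f * (b * g)) * a * b = x / (f * g)"
      if "a \<noteq> 0" "b \<noteq> 0" for x a b f g :: real
      using that by (simp add: field_simps)
    show ?thesis
      unfolding dxdy_monom fi fj using Suc.prems by (simp add: cancel)
  qed
  finally show ?case .
qed

lemma varX_pow: "varX ^ j = monom 1 j"
  by (simp add: varX_def monom_altdef)

lemma varY_pow: "varY ^ i = monom (monom 1 i) 0"
  by (simp add: varY_def poly_const_pow monom_altdef monom_0)

lemma varY_pow_mult_varX_pow: "varY ^ i * varX ^ j = monom (monom 1 i) j"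
  by (simp add: varX_pow varY_pow mult_monom)

lemma fps_diff_op_varY_varX:
  assumes "j \<le> i"
  shows "fps_diff_op c (varY ^ i * varX ^ j)
           = (\<Sum>k\<le>j. monom (monom (c $ k * (fact i * fact j) / (fact (i - k) * fact (j - k)))
                                (i - k)) (j - k))"
  using assms
  by (simp add: fps_diff_op_def varY_pow_mult_varX_pow degree_monom_eq funpow_dxdy_monom smult_monom)

lemma poly_map_const_varX_varY:
  "poly (map_poly (\<lambda>a. [:[:a:]:]) p) (varX * varY)
     = (\<Sum>i\<le>degree p. monom (monom (coeff p i) i) i)"
  by (simp add: poly_altdef degree_map_poly coeff_map_poly power_mult_distrib varX_pow varY_pow
      mult_monom smult_monom)

lemma varY_pow_mult_poly_varX_varY:
  assumes "degree p = d" "d \<le> m"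
  shows "varY ^ (m - d) * poly (map_poly (\<lambda>a. [:[:a:]:]) p) (varX * varY)
           = (\<Sum>k\<le>d. monom (monom (coeff p (d - k)) (m - k)) (d - k))"
proof -
  have "varY ^ (m - d) * poly (map_poly (\<lambda>a. [:[:a:]:]) p) (varX * varY)
      = (\<Sum>i\<le>d. monom (monom (coeff p i) (m - d + i)) i)"
    using assms(1) by (simp add: poly_map_const_varX_varY varY_pow sum_distrib_left mult_monom)
  also have "\<dots> = (\<Sum>k\<le>d. monom (monom (coeff p (d - k)) (m - k)) (d - k))"
    using assms(2) by (intro sum.reindex_bij_witness[of _ "\<lambda>k. d - k" "\<lambda>k. d - k"]) auto
  finally show ?thesis .
qed

lemma varY_pow_mult_poly_varX_varY_inject:
  assumes "varY ^ n * poly (map_poly (\<lambda>a. [:[:a:]:]) p) (varX * varY)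
         = varY ^ n * poly (map_poly (\<lambda>a. [:[:a:]:]) q) (varX * varY)"
  shows "p = q"
proof (rule poly_eqI)
  have "varY \<noteq> 0"
    by (simp add: varY_def)
  with assms have eq: "poly (map_poly (\<lambda>a. [:[:a:]:]) p) (varX * varY)
                    = poly (map_poly (\<lambda>a. [:[:a:]:]) q) (varX * varY)"
    by simp
  fix i
  have diag: "coeff (coeff (poly (map_poly (\<lambda>a. [:[:a:]:]) r) (varX * varY)) i) i = coeff r i"
    for r
    by (auto simp: poly_map_const_varX_varY coeff_sum coeff_eq_0)
  show "coeff p i = coeff q i"
    using diag[of p] diag[of q] eq by simp
qed

lemma varY_pow_mult_poly_eq_fps_diff_op:
  assumes "1 \<le> d" "d \<le> m" "degree p = d" "coeff p d = 1"
  shows "varY ^ (m - d) * poly (map_poly (\<lambda>a. [:[:a:]:]) p) (varX * varY)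
           = fps_diff_op (fps_exp 1 oo - fps_of_poly (Rhat d m (RS d m p))) (varY ^ m * varX ^ d)"
  unfolding varY_pow_mult_poly_varX_varY[OF assms(3,2)] fps_diff_op_varY_varX[OF assms(2)]
proof (intro sum.cong refl)
  fix k
  assume "k \<in> {..d}"
  then show "monom (monom (coeff p (d - k)) (m - k)) (d - k)
      = monom (monom ((fps_exp 1 oo - fps_of_poly (Rhat d m (RS d m p))) $ k * (fact m * fact d)
                      / (fact (m - k) * fact (d - k))) (m - k)) (d - k)"
    using assms by (simp add: exp_neg_Rhat_RS_nth)
qed

theorem mainTheorem15:
  fixes m d :: nat and p :: "real poly"
  assumes "1 \<le> d" and "d \<le> m"
    and "degree p = d" and "lead_coeff p = 1"
    and "nonneg_rooted p"
  shows "varY ^ (m - d) * poly (map_poly (\<lambda>a. [:[:a:]:]) p) (varX * varY)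
           = fps_diff_op (fps_exp 1 oo (- fps_of_poly (Rhat d m (RS d m p)))) (varY ^ m * varX ^ d)
         \<and> (\<forall>q::real poly. degree q = d \<and> lead_coeff q = 1 \<and> nonneg_rooted q
               \<and> RS d m q = RS d m p \<longrightarrow> q = p)"
proof (intro conjI allI impI)
  have "coeff p d = 1"
    using assms(3,4) by simp
  note identity_p = varY_pow_mult_poly_eq_fps_diff_op[OF assms(1-3) this]
  then show "varY ^ (m - d) * poly (map_poly (\<lambda>a. [:[:a:]:]) p) (varX * varY)
      = fps_diff_op (fps_exp 1 oo (- fps_of_poly (Rhat d m (RS d m p)))) (varY ^ m * varX ^ d)" .
  fix q :: "real poly"
  assume q: "degree q = d \<and> lead_coeff q = 1 \<and> nonneg_rooted q \<and> RS d m q = RS d m p"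
  then have "coeff q d = 1"
    by auto
  with q show "q = p"
    using identity_p varY_pow_mult_poly_eq_fps_diff_op[OF assms(1,2), of q]
    by (intro varY_pow_mult_poly_varX_varY_inject[of "m - d"]) auto
qed

end
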